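(* Let $h(x) := \log\Gamma(x)$ for $x>0$. For arbitrary $x>0$, \[ -\frac{1}{8x} - \frac{1}{24x(4x^2-1)_+} < h(x+1/2) - h(x) - \frac{\log x}{2} < -\frac{1}{8(x+1/2)} . \]
   Context: $(y)_+ := \max(y,0)$; for $0 < x \le 1/2$ the term $\frac{1}{24x(4x^2-1)_+}$ is interpreted as $+\infty$, so the lower bound is then $-\infty$. *)

theory Defs
  imports "HOL-Analysis.Analysis"
begin

end

theory Submission
  imports Defs "HOL-Real_Asymp.Real_Asymp"
begin

text \<open>Let \<open>F y = ln \<Gamma>(y + 1/2) - ln \<Gamma>(y) - (ln y)/2\<close>. The functional equation of \<open>\<Gamma>\<close> gives
  \<open>F y - F (y + 1) = (ln y + ln (y + 1))/2 - ln (y + 1/2)\<close>, an elementary quantity, and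
  log-convexity of \<open>\<Gamma>\<close> squeezes \<open>F y\<close> between \<open>(ln y - ln (y + 1/2))/2\<close> and \<open>0\<close>, so
  \<open>F (x + n) \<longrightarrow> 0\<close>. Hence \<open>F x\<close> is the telescoping sum of these increments, so any
  function vanishing at infinity whose increments strictly dominate (or are strictly dominated
  by) those of \<open>F\<close> bounds \<open>F x\<close> strictly. Both increment comparisons follow from
  \<open>ln w \<le> w - 1\<close>.\<close>

lemma ln_Gamma_real_plus1:
  fixes y :: real
  assumes "y > 0"
  shows "ln (Gamma (y + 1)) = ln y + ln (Gamma y)"
proof -
  have "Gamma (y + 1) = y * Gamma y"
    using assms by (intro Gamma_plus1) (auto dest: nonpos_Ints_nonpos)
  then show ?thesis
    using assms by (simp add: ln_mult_pos)
qed

lemma ln_Gamma_real_midpoint_le: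
  fixes a b :: real
  assumes "a > 0" "b > 0"
  shows "ln (Gamma ((a + b) / 2)) \<le> (ln (Gamma a) + ln (Gamma b)) / 2"
proof -
  have "(ln \<circ> Gamma) ((1 - 1/2) *\<^sub>R a + (1/2) *\<^sub>R b)
          \<le> (1 - 1/2) * (ln \<circ> Gamma) a + (1/2) * (ln \<circ> Gamma) b"
    using assms by (intro convex_onD[OF log_convex_Gamma_real]) auto
  then show ?thesis
    by (simp add: field_simps)
qed

definition ln_Gamma_half_gap :: "real \<Rightarrow> real" where
  "ln_Gamma_half_gap y = ln (Gamma (y + 1/2)) - ln (Gamma y) - ln y / 2"

lemma ln_Gamma_half_gap_step:
  assumes "y > 0"
  shows "ln_Gamma_half_gap y - ln_Gamma_half_gap (y + 1)
           = (ln y + ln (y + 1)) / 2 - ln (y + 1/2)"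
proof -
  have "ln (Gamma (y + 1 + 1/2)) = ln (y + 1/2) + ln (Gamma (y + 1/2))"
    using assms ln_Gamma_real_plus1[of "y + 1/2"] by (simp add: add_ac)
  then show ?thesis
    using ln_Gamma_real_plus1[OF assms] by (simp add: ln_Gamma_half_gap_def)
qed

lemma ln_Gamma_half_gap_nonpos:
  assumes "y > 0"
  shows "ln_Gamma_half_gap y \<le> 0"
proof -
  have mid: "(y + (y + 1)) / 2 = y + 1/2"
    by simp
  have "ln (Gamma (y + 1/2)) \<le> (ln (Gamma y) + ln (Gamma (y + 1))) / 2"
    using ln_Gamma_real_midpoint_le[of y "y + 1", unfolded mid] assms by simp
  then show ?thesis
    using ln_Gamma_real_plus1[OF assms] by (simp add: ln_Gamma_half_gap_def)
qed

lemma ln_Gamma_half_gap_ge: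
  assumes "y > 0"
  shows "(ln y - ln (y + 1/2)) / 2 \<le> ln_Gamma_half_gap y"
proof -
  have mid: "(y + 1/2 + (y + 1/2 + 1)) / 2 = y + 1"
    by simp
  have "ln (Gamma (y + 1)) \<le> (ln (Gamma (y + 1/2)) + ln (Gamma (y + 1/2 + 1))) / 2"
    using ln_Gamma_real_midpoint_le[of "y + 1/2" "y + 1/2 + 1", unfolded mid] assms by simp
  then show ?thesis
    using ln_Gamma_real_plus1[OF assms] ln_Gamma_real_plus1[of "y + 1/2"] assms
    by (simp add: ln_Gamma_half_gap_def)
qed

lemma tendsto_ln_Gamma_half_gap:
  fixes x :: real
  assumes "x > 0"
  shows "(\<lambda>n. ln_Gamma_half_gap (x + real n)) \<longlonglongrightarrow> 0"
proof (rule tendsto_sandwich)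
  show "(\<lambda>n. (ln (x + real n) - ln (x + real n + 1/2)) / 2) \<longlonglongrightarrow> 0"
    by real_asymp
  show "\<forall>\<^sub>F n in sequentially. (ln (x + real n) - ln (x + real n + 1/2)) / 2
          \<le> ln_Gamma_half_gap (x + real n)"
    using assms by (intro always_eventually allI ln_Gamma_half_gap_ge) simp
  show "\<forall>\<^sub>F n in sequentially. ln_Gamma_half_gap (x + real n) \<le> 0"
    using assms by (intro always_eventually allI ln_Gamma_half_gap_nonpos) simp
qed simp

lemma less_of_telescoping_less:
  fixes f g :: "real \<Rightarrow> real"
  assumes step: "\<And>y. y \<ge> x \<Longrightarrow> f y - f (y + 1) < g y - g (y + 1)"
    and f: "(\<lambda>n. f (x + real n)) \<longlonglongrightarrow> 0"
    and g: "(\<lambda>n. g (x + real n)) \<longlonglongrightarrow> 0"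
  shows "f x < g x"
proof -
  define h where "h n = g (x + real n) - f (x + real n)" for n
  have h_step: "h (Suc n) < h n" for n
    using step[of "x + real n"] by (simp add: h_def add_ac)
  have "decseq h"
    using h_step by (intro decseq_SucI less_imp_le)
  moreover have "h \<longlonglongrightarrow> 0"
    unfolding h_def using tendsto_diff[OF g f] by simp
  ultimately have "0 \<le> h 1"
    by (rule decseq_ge)
  with h_step[of 0] show ?thesis
    by (simp add: h_def)
qed

lemma ln_midpoint_gap_le:
  fixes y :: real
  assumes "y > 0"
  shows "(ln y + ln (y + 1)) / 2 - ln (y + 1/2) \<le> - 1 / (8 * (y + 1/2)^2)"
proof -
  define w where "w = y * (y + 1) / (y + 1/2)^2"
  have "w > 0"
    using assms by (simp add: w_def)
  have "ln w = ln y + ln (y + 1) - 2 * ln (y + 1/2)"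
    using assms by (simp add: w_def ln_div ln_mult_pos ln_realpow)
  then have "(ln y + ln (y + 1)) / 2 - ln (y + 1/2) = ln w / 2"
    by (simp add: field_simps)
  also have "\<dots> \<le> (w - 1) / 2"
    using ln_le_minus_one[OF \<open>w > 0\<close>] by simp
  also have "\<dots> = - 1 / (8 * (y + 1/2)^2)"
    using assms by (simp add: w_def divide_simps) (simp add: power2_eq_square algebra_simps)
  finally show ?thesis .
qed

lemma ln_midpoint_gap_ge:
  fixes y :: real
  assumes "y > 0"
  shows "- 1 / (8 * y * (y + 1)) \<le> (ln y + ln (y + 1)) / 2 - ln (y + 1/2)"
proof -
  define w where "w = (y + 1/2)^2 / (y * (y + 1))"
  have "w > 0"
    using assms by (simp add: w_def)
  have "ln w = 2 * ln (y + 1/2) - ln y - ln (y + 1)"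
    using assms by (simp add: w_def ln_div ln_mult_pos ln_realpow)
  then have "- ((ln y + ln (y + 1)) / 2 - ln (y + 1/2)) = ln w / 2"
    by (simp add: field_simps)
  also have "\<dots> \<le> (w - 1) / 2"
    using ln_le_minus_one[OF \<open>w > 0\<close>] by simp
  also have "\<dots> = 1 / (8 * y * (y + 1))"
    using assms by (simp add: w_def divide_simps) (simp add: power2_eq_square algebra_simps)
  finally show ?thesis
    by simp
qed

definition ln_Gamma_half_gap_upper :: "real \<Rightarrow> real" where
  "ln_Gamma_half_gap_upper y = - 1 / (8 * (y + 1/2))"

definition ln_Gamma_half_gap_lower :: "real \<Rightarrow> real" where
  "ln_Gamma_half_gap_lower y = - 1 / (8 * y) - 1 / (24 * y * (4 * y^2 - 1))"

lemma ln_Gamma_half_gap_upper_increment_gt: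
  fixes y :: real
  assumes "y > 0"
  shows "- 1 / (8 * (y + 1/2)^2) < ln_Gamma_half_gap_upper y - ln_Gamma_half_gap_upper (y + 1)"
proof -
  have "ln_Gamma_half_gap_upper y - ln_Gamma_half_gap_upper (y + 1)
          = - 1 / (8 * (y + 1/2) * (y + 3/2))"
    using assms by (simp add: ln_Gamma_half_gap_upper_def divide_simps)
  moreover have "8 * (y + 1/2)^2 < 8 * (y + 1/2) * (y + 3/2)"
    using assms by (simp add: power2_eq_square algebra_simps)
  then have "1 / (8 * (y + 1/2) * (y + 3/2)) < 1 / (8 * (y + 1/2)^2)"
    using assms by (intro frac_less2) simp_all
  ultimately show ?thesis
    by simp
qed

lemma ln_Gamma_half_gap_lower_increment_lt:
  fixes y :: real
  assumes "y > 1/2"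
  shows "ln_Gamma_half_gap_lower y - ln_Gamma_half_gap_lower (y + 1) < - 1 / (8 * y * (y + 1))"
proof -
  define p where "p t = t * (4 * t^2 - 1)" for t :: real
  have "1/2 * (1/2) < y * y"
    using assms by (intro mult_strict_mono) auto
  then have "p y > 0"
    using assms by (simp add: p_def power2_eq_square)
  have "p (y + 1) - p y = 3 * (2 * y + 1)^2"
    by (simp add: p_def power2_eq_square algebra_simps)
  moreover have "(2 * y + 1)^2 > 0"
    using assms by simp
  ultimately have "p y < p (y + 1)"
    by linarith
  then have "1 / (24 * p (y + 1)) < 1 / (24 * p y)"
    using \<open>p y > 0\<close> by (intro frac_less2) simp_all
  then have "1 / (24 * (y + 1) * (4 * (y + 1)^2 - 1)) < 1 / (24 * y * (4 * y^2 - 1))"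
    by (simp only: p_def mult.assoc)
  moreover have "1 / (8 * y) - 1 / (8 * (y + 1)) = 1 / (8 * y * (y + 1))"
    using assms by (simp add: divide_simps)
  ultimately show ?thesis
    unfolding ln_Gamma_half_gap_lower_def minus_divide_left[symmetric] by linarith
qed

theorem lemma12:
  fixes x :: real
  assumes "x > 0"
  shows "(x > 1/2 \<longrightarrow>
           - 1 / (8 * x) - 1 / (24 * x * (4 * x^2 - 1))
             < ln (Gamma (x + 1/2)) - ln (Gamma x) - ln x / 2)
       \<and> ln (Gamma (x + 1/2)) - ln (Gamma x) - ln x / 2 < - 1 / (8 * (x + 1/2))"
proof -
  have "ln_Gamma_half_gap x < ln_Gamma_half_gap_upper x"
  proof (rule less_of_telescoping_less[where f = ln_Gamma_half_gap])
    fix y assume "x \<le> y"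
    with assms have "y > 0"
      by simp
    show "ln_Gamma_half_gap y - ln_Gamma_half_gap (y + 1)
            < ln_Gamma_half_gap_upper y - ln_Gamma_half_gap_upper (y + 1)"
      using ln_Gamma_half_gap_step[OF \<open>y > 0\<close>] ln_midpoint_gap_le[OF \<open>y > 0\<close>]
        ln_Gamma_half_gap_upper_increment_gt[OF \<open>y > 0\<close>]
      by linarith
  next
    show "(\<lambda>n. ln_Gamma_half_gap (x + real n)) \<longlonglongrightarrow> 0"
      using assms by (rule tendsto_ln_Gamma_half_gap)
    show "(\<lambda>n. ln_Gamma_half_gap_upper (x + real n)) \<longlonglongrightarrow> 0"
      unfolding ln_Gamma_half_gap_upper_def by real_asymp
  qed
  moreover have "ln_Gamma_half_gap_lower x < ln_Gamma_half_gap x" if "x > 1/2"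
  proof (rule less_of_telescoping_less[where g = ln_Gamma_half_gap])
    fix y assume "x \<le> y"
    with that have "y > 1/2" "y > 0"
      by simp_all
    show "ln_Gamma_half_gap_lower y - ln_Gamma_half_gap_lower (y + 1)
            < ln_Gamma_half_gap y - ln_Gamma_half_gap (y + 1)"
      using ln_Gamma_half_gap_step[OF \<open>y > 0\<close>] ln_midpoint_gap_ge[OF \<open>y > 0\<close>]
        ln_Gamma_half_gap_lower_increment_lt[OF \<open>y > 1/2\<close>]
      by linarith
  next
    show "(\<lambda>n. ln_Gamma_half_gap (x + real n)) \<longlonglongrightarrow> 0"
      using assms by (rule tendsto_ln_Gamma_half_gap)
    show "(\<lambda>n. ln_Gamma_half_gap_lower (x + real n)) \<longlonglongrightarrow> 0"
      unfolding ln_Gamma_half_gap_lower_def by real_asymp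
  qed
  ultimately show ?thesis
    by (simp add: ln_Gamma_half_gap_def ln_Gamma_half_gap_upper_def ln_Gamma_half_gap_lower_def)
qed

end
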